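(* Let $A=\{0,36,72,108,144\}\oplus\{0,100,200\}\oplus\{0,225\}\subseteq\mathbb{Z}$ (the set of all sums $a+b+c$ with $a\in\{0,36,72,108,144\}$, $b\in\{0,100,200\}$, $c\in\{0,225\}$) and let $\mathcal{T}_A=\mathbb{Z}+\frac{1}{900}A\subseteq\mathbb{R}$. Then $\mathcal{T}_A$ has the universal spectrum $\Lambda_A=900\mathbb{Z}+A$.
   Context: A measurable set $\Omega\subseteq\mathbb{R}$ of finite positive Lebesgue measure tiles $\mathbb{R}$ by translations with tiling set $\mathcal{T}$ if $\Omega+\mathcal{T}=\mathbb{R}$ and $(\Omega+t)\cap(\Omega+t')$ has Lebesgue measure zero for all distinct $t,t'\in\mathcal{T}$. Such an $\Omega$ is a spectral set with spectrum $\Lambda$ (a discrete subset of $\mathbb{R}$) if the functions $e^{2\pi i\lambda x}$, $\lambda\in\Lambda$, restricted to $\Omega$ form an orthogonal basis of $L^2(\Omega)$. A set $\Lambda$ is a universal spectrum for a tiling set $\mathcal{T}$ if every set $\Omega$ that tiles $\mathbb{R}$ by translations with tiling set $\mathcal{T}$ is a spectral set with spectrum $\Lambda$. *)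

theory Defs
  imports "HOL-Analysis.Analysis"
begin

definition tiles_with :: "real set \<Rightarrow> real set \<Rightarrow> bool" where
  "tiles_with \<Omega> T \<longleftrightarrow>
     \<Omega> \<in> sets lebesgue \<and> 0 < emeasure lebesgue \<Omega> \<and> emeasure lebesgue \<Omega> < \<infinity> \<and>
     (\<Union>t\<in>T. (\<lambda>x. x + t) ` \<Omega>) = UNIV \<and>
     (\<forall>t\<in>T. \<forall>t'\<in>T. t \<noteq> t' \<longrightarrow>
        ((\<lambda>x. x + t) ` \<Omega>) \<inter> ((\<lambda>x. x + t') ` \<Omega>) \<in> null_sets lebesgue)"

definition discrete_set :: "real set \<Rightarrow> bool" where
  "discrete_set \<Lambda> \<longleftrightarrow> (\<forall>x\<in>\<Lambda>. \<exists>e>0. \<forall>y\<in>\<Lambda>. dist y x < e \<longrightarrow> y = x)"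

definition expo :: "real \<Rightarrow> real \<Rightarrow> complex" where
  "expo l x = cis (2 * pi * l * x)"

definition L2_on :: "real set \<Rightarrow> (real \<Rightarrow> complex) \<Rightarrow> bool" where
  "L2_on \<Omega> f \<longleftrightarrow> set_borel_measurable lebesgue \<Omega> f \<and>
                    set_integrable lebesgue \<Omega> (\<lambda>x. (cmod (f x))\<^sup>2)"

definition L2_inner :: "real set \<Rightarrow> (real \<Rightarrow> complex) \<Rightarrow> (real \<Rightarrow> complex) \<Rightarrow> complex" where
  "L2_inner \<Omega> f g = (LINT x:\<Omega>|lebesgue. f x * cnj (g x))"

text \<open>Omega is spectral with spectrum Lambda: Lambda is discrete and the exponentials
  e_lambda, lambda in Lambda, restricted to Omega form an orthogonal basis of L^2(Omega),
  i.e. they are pairwise orthogonal and complete (the only element of L^2(Omega)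
  orthogonal to all of them is zero a.e. on Omega).\<close>
definition spectral_with :: "real set \<Rightarrow> real set \<Rightarrow> bool" where
  "spectral_with \<Omega> \<Lambda> \<longleftrightarrow>
     \<Omega> \<in> sets lebesgue \<and> 0 < emeasure lebesgue \<Omega> \<and> emeasure lebesgue \<Omega> < \<infinity> \<and>
     discrete_set \<Lambda> \<and>
     (\<forall>l\<in>\<Lambda>. \<forall>m\<in>\<Lambda>. l \<noteq> m \<longrightarrow> L2_inner \<Omega> (expo l) (expo m) = 0) \<and>
     (\<forall>f. L2_on \<Omega> f \<longrightarrow> (\<forall>l\<in>\<Lambda>. L2_inner \<Omega> f (expo l) = 0) \<longrightarrow>
          (AE x in lebesgue. x \<in> \<Omega> \<longrightarrow> f x = 0))"

definition universal_spectrum :: "real set \<Rightarrow> real set \<Rightarrow> bool" where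
  "universal_spectrum \<Lambda> T \<longleftrightarrow> (\<forall>\<Omega>. tiles_with \<Omega> T \<longrightarrow> spectral_with \<Omega> \<Lambda>)"

definition set_A :: "real set" where
  "set_A = {a + b + c | a b c. a \<in> {0, 36, 72, 108, 144} \<and> b \<in> {0, 100, 200} \<and> c \<in> {0, 225}}"

end

theory Submission
  imports Defs
begin

definition unity_root :: "int \<Rightarrow> int \<Rightarrow> complex" where
  "unity_root N m = cis (2 * pi * of_int m / of_int N)"

lemma unity_root_0 [simp]: "unity_root N 0 = 1"
  by (simp add: unity_root_def)

lemma unity_root_add: "unity_root N (m + n) = unity_root N m * unity_root N n"
  by (simp add: unity_root_def cis_mult add_divide_distrib distrib_left)

lemma unity_root_pow: "unity_root N m ^ k = unity_root N (int k * m)"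
  unfolding unity_root_def Complex.DeMoivre by (rule arg_cong[where f = cis]) simp

lemma unity_root_multiple [simp]: "N \<noteq> 0 \<Longrightarrow> unity_root N (N * k) = 1"
  using cis_multiple_2pi[of "of_int k"] by (simp add: unity_root_def mult_ac)


lemma unity_root_eq_1_iff:
  assumes "N \<noteq> 0" shows "unity_root N m = 1 \<longleftrightarrow> N dvd m"
proof
  assume "unity_root N m = 1"
  then have "exp (\<i> * complex_of_real (2 * pi * of_int m / of_int N)) = 1"
    by (simp add: unity_root_def cis_conv_exp)
  then obtain k :: int where "2 * pi * of_int m / of_int N = of_int (2 * k) * pi"
    by (auto simp: exp_eq_1)
  then have "of_int m = (of_int (N * k) :: real)"
    using assms by (simp add: field_simps)
  then show "N dvd m" by (simp only: of_int_eq_iff) simp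
qed (use assms in auto)

lemma unity_root_mod: "N \<noteq> 0 \<Longrightarrow> unity_root N (m mod N) = unity_root N m"
  by (metis mod_mult_div_eq unity_root_add unity_root_multiple mult_1_right)

lemma unity_root_cong:
  "N \<noteq> 0 \<Longrightarrow> m mod N = m' mod N \<Longrightarrow> unity_root N m = unity_root N m'"
  by (metis unity_root_mod)

lemma sum_unity_root_eq_0:
  assumes "N > 0" "\<not> N dvd d"
  shows "(\<Sum>m\<in>{0..<N}. unity_root N (d * m)) = 0"
proof -
  have "(\<Sum>m\<in>{0..<N}. unity_root N (d * m)) = (\<Sum>k<nat N. unity_root N d ^ k)"
    by (rule sum.reindex_bij_witness[of _ int nat]) (auto simp: unity_root_pow mult.commute)
  moreover have "unity_root N d \<noteq> 1" "unity_root N d ^ nat N = 1"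
    using assms by (simp_all add: unity_root_pow unity_root_eq_1_iff)
  ultimately show ?thesis by (simp add: sum_gp_strict)
qed

definition tiles_mod :: "int \<Rightarrow> int set \<Rightarrow> int set \<Rightarrow> bool" where
  "tiles_mod N A S \<longleftrightarrow>
     (\<forall>m. \<exists>n\<in>S. \<exists>a\<in>A. (n + a) mod N = m mod N) \<and>
     (\<forall>n\<in>S. \<forall>n'\<in>S. \<forall>a\<in>A. \<forall>a'\<in>A. (n + a) mod N = (n' + a') mod N \<longrightarrow> n = n' \<and> a = a')"

lemma tiles_mod_cover:
  "tiles_mod N A S \<Longrightarrow> \<exists>n\<in>S. \<exists>a\<in>A. (n + a) mod N = m mod N"
  unfolding tiles_mod_def by blast

lemma tiles_mod_unique:
  "tiles_mod N A S \<Longrightarrow> n \<in> S \<Longrightarrow> n' \<in> S \<Longrightarrow> a \<in> A \<Longrightarrow> a' \<in> A \<Longrightarrow>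
    (n + a) mod N = (n' + a') mod N \<Longrightarrow> n = n' \<and> a = a'"
  unfolding tiles_mod_def by blast

lemma tiles_mod_bij:
  assumes "N > 0" "tiles_mod N A S"
  shows "bij_betw (\<lambda>(n, a). (n + a) mod N) (S \<times> A) {0..<N}"
proof (rule bij_betwI')
  fix m assume "m \<in> {0..<N}"
  then obtain n a where "n \<in> S" "a \<in> A" "(n + a) mod N = m"
    using tiles_mod_cover[OF assms(2), of m] by auto
  then show "\<exists>p\<in>S \<times> A. m = (case p of (n, a) \<Rightarrow> (n + a) mod N)" by force
next
  fix p q assume "p \<in> S \<times> A" "q \<in> S \<times> A"
  then show "((case p of (n, a) \<Rightarrow> (n + a) mod N) = (case q of (n, a) \<Rightarrow> (n + a) mod N)) = (p = q)"
    using tiles_mod_unique[OF assms(2)] by (auto simp: case_prod_unfold prod_eq_iff)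
qed (use assms(1) in auto)

lemma tiles_mod_card:
  assumes "N > 0" "tiles_mod N A S"
  shows "finite S" "finite A" "card S * card A = nat N"
proof -
  note bij = tiles_mod_bij[OF assms]
  have fin: "finite (S \<times> A)" using bij_betw_finite[OF bij] by simp
  have card: "card (S \<times> A) = nat N" using bij_betw_same_card[OF bij] by simp
  with assms(1) have "S \<times> A \<noteq> {}" by auto
  with fin show "finite S" "finite A"
    using finite_cartesian_productD1 finite_cartesian_productD2 by blast+
  show "card S * card A = nat N" using card by (simp add: card_cartesian_product)
qed

lemma tiles_mod_sum_unity_root:
  assumes "N > 0" "tiles_mod N A S" "\<not> N dvd d"
  shows "(\<Sum>n\<in>S. unity_root N (d * n)) * (\<Sum>a\<in>A. unity_root N (d * a)) = 0"
proof -
  have "unity_root N (d * n) * unity_root N (d * a) = unity_root N (d * ((n + a) mod N))" for n a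
  proof -
    have "(d * (n + a)) mod N = (d * ((n + a) mod N)) mod N" by (simp add: mod_mult_right_eq)
    then show ?thesis using assms(1)
      by (metis distrib_left less_irrefl unity_root_add unity_root_cong)
  qed
  then have "(\<Sum>n\<in>S. unity_root N (d * n)) * (\<Sum>a\<in>A. unity_root N (d * a)) =
        (\<Sum>(n, a)\<in>S \<times> A. unity_root N (d * ((n + a) mod N)))"
    unfolding sum_product sum.cartesian_product by simp
  also have "\<dots> = (\<Sum>m\<in>{0..<N}. unity_root N (d * m))"
    using sum.reindex_bij_betw[OF tiles_mod_bij[OF assms(1,2)], of "\<lambda>m. unity_root N (d * m)"]
    by (simp add: case_prod_unfold)
  also have "\<dots> = 0" using assms(1,3) by (rule sum_unity_root_eq_0)
  finally show ?thesis .
qed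

lemma tiles_mod_orthogonal:
  assumes "N > 0" "tiles_mod N A S" "a \<in> A" "a' \<in> A" "a \<noteq> a'"
    and "(\<Sum>b\<in>A. unity_root N ((a - a') * b)) \<noteq> 0"
  shows "(\<Sum>n\<in>S. unity_root N ((a - a') * n)) = 0"
proof -
  obtain n where "n \<in> S"
    using tiles_mod_cover[OF assms(2)] by blast
  then have "(n + a) mod N \<noteq> (n + a') mod N"
    using tiles_mod_unique[OF assms(2)] assms(3-5) by blast
  then have "\<not> N dvd (a - a')"
    using mod_eq_dvd_iff[of "n + a" N "n + a'"] by simp
  then show ?thesis
    using tiles_mod_sum_unity_root[OF assms(1,2)] assms(6) by (simp only: mult_eq_0_iff) blast
qed

lemma unity_root_matrix_complete:
  fixes a s :: "'i::finite \<Rightarrow> int" and v :: "'i \<Rightarrow> complex"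
  assumes orth: "\<And>i i'. i \<noteq> i' \<Longrightarrow> (\<Sum>j\<in>UNIV. unity_root N ((a i' - a i) * s j)) = 0"
    and v: "\<And>i. (\<Sum>j\<in>UNIV. v j * unity_root N (- a i * s j)) = 0"
  shows "v j = 0"
proof -
  define c where "c = complex_of_nat CARD('i)"
  have "c \<noteq> 0" by (simp add: c_def)
  define W :: "complex^'i^'i" where "W = (\<chi> i j. unity_root N (- a i * s j))"
  define W' :: "complex^'i^'i" where "W' = (\<chi> i j. unity_root N (a j * s i) / c)"
  have "(\<Sum>k\<in>UNIV. unity_root N (- a i * s k) * (unity_root N (a i' * s k) / c)) =
      (if i = i' then 1 else 0)" for i i'
  proof -
    have "(\<Sum>k\<in>UNIV. unity_root N (- a i * s k) * (unity_root N (a i' * s k) / c)) =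
        (\<Sum>k\<in>UNIV. unity_root N ((a i' - a i) * s k)) / c"
      by (simp add: sum_divide_distrib unity_root_add [symmetric] algebra_simps)
    then show ?thesis using orth[of i i'] \<open>c \<noteq> 0\<close> by (simp add: c_def)
  qed
  then have "W ** W' = mat 1"
    unfolding W_def W'_def matrix_matrix_mult_def mat_def by (simp add: vec_eq_iff)
  then have W'W: "W' ** W = mat 1" using matrix_left_right_inverse by blast
  define V :: "complex^'i" where "V = (\<chi> j. v j)"
  have "W *v V = 0"
    using v unfolding W_def V_def matrix_vector_mult_def by (simp add: vec_eq_iff mult.commute)
  have "V = (W' ** W) *v V" using W'W by simp
  also have "\<dots> = W' *v (W *v V)" by (simp add: matrix_vector_mul_assoc)
  also have "\<dots> = 0" using \<open>W *v V = 0\<close> by simp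
  finally show ?thesis by (simp add: V_def vec_eq_iff)
qed

text \<open>The index type \<open>'i\<close> only serves to view the character table of \<open>A\<close> on \<open>S\<close> as a square matrix.\<close>

lemma orthogonal_unity_roots_complete:
  fixes v :: "int \<Rightarrow> complex"
  assumes fin: "finite S" "finite A" and card: "card S = CARD('i::finite)" "card A = CARD('i)"
    and orth: "\<forall>a\<in>A. \<forall>a'\<in>A. a \<noteq> a' \<longrightarrow> (\<Sum>n\<in>S. unity_root N ((a - a') * n)) = 0"
    and v: "\<forall>a\<in>A. (\<Sum>n\<in>S. v n * unity_root N (- a * n)) = 0"
    and "n \<in> S"
  shows "v n = 0"
proof -
  obtain g where g: "bij_betw g (UNIV :: 'i set) S"
    using finite_same_card_bij[of "UNIV :: 'i set" S] fin card by auto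
  obtain h where h: "bij_betw h (UNIV :: 'i set) A"
    using finite_same_card_bij[of "UNIV :: 'i set" A] fin card by auto
  have sum_S: "(\<Sum>j\<in>UNIV. F (g j)) = (\<Sum>n\<in>S. F n)" for F :: "int \<Rightarrow> complex"
    using sum.reindex_bij_betw[OF g] .
  have "v (g j) = 0" for j
  proof (rule unity_root_matrix_complete[where a = h and s = g])
    fix i i' :: 'i assume "i \<noteq> i'"
    then have "h i' \<noteq> h i" "h i \<in> A" "h i' \<in> A"
      using h by (auto dest: bij_betw_apply bij_betw_imp_inj_on inj_onD)
    then show "(\<Sum>j\<in>UNIV. unity_root N ((h i' - h i) * g j)) = 0"
      using orth sum_S[of "\<lambda>n. unity_root N ((h i' - h i) * n)"] by simp
  next
    show "(\<Sum>j\<in>UNIV. v (g j) * unity_root N (- h i * g j)) = 0" for i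
      using v bij_betw_apply[OF h] sum_S[of "\<lambda>n. v n * unity_root N (- h i * n)"] by simp
  qed
  moreover obtain j where "n = g j" using g \<open>n \<in> S\<close> by (metis bij_betw_iff_bijections)
  ultimately show ?thesis by simp
qed

definition A_digits :: "nat \<times> nat \<times> nat \<Rightarrow> int" where
  "A_digits = (\<lambda>(i, j, l). 36 * int i + 100 * int j + 225 * int l)"

definition A_indices :: "(nat \<times> nat \<times> nat) set" where
  "A_indices = {..<5} \<times> {..<3} \<times> {..<2}"

definition A_int :: "int set" where
  "A_int = A_digits ` A_indices"

lemma set_A_eq: "set_A = of_int ` A_int"
proof -
  have digits: "x \<in> {0, 36, 72, 108, 144} \<longleftrightarrow> (\<exists>i\<in>{..<5::nat}. x = 36 * real i)"
    "y \<in> {0, 100, 200} \<longleftrightarrow> (\<exists>j\<in>{..<3::nat}. y = 100 * real j)"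
    "z \<in> {0, 225} \<longleftrightarrow> (\<exists>l\<in>{..<2::nat}. z = 225 * real l)" for x y z :: real
    by (simp_all add: lessThan_nat_numeral) auto
  have "x \<in> set_A \<longleftrightarrow> (\<exists>i\<in>{..<5::nat}. \<exists>j\<in>{..<3::nat}. \<exists>l\<in>{..<2::nat}.
      x = 36 * real i + 100 * real j + 225 * real l)" for x
    unfolding set_A_def mem_Collect_eq digits by blast
  also have "\<dots> x \<longleftrightarrow> (\<exists>a\<in>A_int. x = of_int a)" for x
    unfolding A_int_def A_indices_def A_digits_def by auto
  finally show ?thesis unfolding image_def by blast
qed

lemma dvd_abs_less_imp_eq_0:
  fixes p x :: int
  assumes "p dvd x" "\<bar>x\<bar> < p"
  shows "x = 0"
proof (rule ccontr)
  assume "x \<noteq> 0"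
  then have "\<bar>p\<bar> \<le> \<bar>x\<bar>" using assms(1) by (rule dvd_imp_le_int)
  then show False using assms(2) by linarith
qed

lemma A_digits_diff_dvd:
  fixes x y z :: int
  assumes "\<bar>x\<bar> < 5" "\<bar>y\<bar> < 3" "\<bar>z\<bar> < 2"
  shows "5 dvd 36 * x + 100 * y + 225 * z \<Longrightarrow> x = 0"
    and "3 dvd 36 * x + 100 * y + 225 * z \<Longrightarrow> y = 0"
    and "2 dvd 36 * x + 100 * y + 225 * z \<Longrightarrow> z = 0"
proof -
  assume "5 dvd 36 * x + 100 * y + 225 * z"
  moreover have "x = (36 * x + 100 * y + 225 * z) - 5 * (7 * x + 20 * y + 45 * z)" by simp
  ultimately have "5 dvd x" by (metis dvd_diff dvd_triv_left)
  then show "x = 0" using assms(1) by (rule dvd_abs_less_imp_eq_0)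
next
  assume "3 dvd 36 * x + 100 * y + 225 * z"
  moreover have "y = (36 * x + 100 * y + 225 * z) - 3 * (12 * x + 33 * y + 75 * z)" by simp
  ultimately have "3 dvd y" by (metis dvd_diff dvd_triv_left)
  then show "y = 0" using assms(2) by (rule dvd_abs_less_imp_eq_0)
next
  assume "2 dvd 36 * x + 100 * y + 225 * z"
  moreover have "z = (36 * x + 100 * y + 225 * z) - 2 * (18 * x + 50 * y + 112 * z)" by simp
  ultimately have "2 dvd z" by (metis dvd_diff dvd_triv_left)
  then show "z = 0" using assms(3) by (rule dvd_abs_less_imp_eq_0)
qed

lemma A_int_diff_digits:
  assumes "a \<in> A_int" "a' \<in> A_int"
  obtains x y z :: int where "a - a' = 36 * x + 100 * y + 225 * z"
    and "\<bar>x\<bar> < 5" "\<bar>y\<bar> < 3" "\<bar>z\<bar> < 2"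
proof -
  obtain i j l i' j' l' where aa': "a = A_digits (i, j, l)" "a' = A_digits (i', j', l')"
    and "i < 5" "j < 3" "l < 2" "i' < 5" "j' < 3" "l' < 2"
    using assms unfolding A_int_def A_indices_def by auto
  show ?thesis
  proof (rule that[of "int i - int i'" "int j - int j'" "int l - int l'"])
    show "a - a' = 36 * (int i - int i') + 100 * (int j - int j') + 225 * (int l - int l')"
      unfolding aa' A_digits_def by (simp add: algebra_simps)
  qed (use \<open>i < 5\<close> \<open>j < 3\<close> \<open>l < 2\<close> \<open>i' < 5\<close> \<open>j' < 3\<close> \<open>l' < 2\<close> in auto)
qed

lemma A_digits_inj: "inj_on A_digits A_indices"
proof (rule inj_onI)
  fix p q assume "p \<in> A_indices" "q \<in> A_indices" "A_digits p = A_digits q"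
  then obtain i j l i' j' l' where pq: "p = (i, j, l)" "q = (i', j', l')"
    and "i < 5" "j < 3" "l < 2" "i' < 5" "j' < 3" "l' < 2"
    and eq: "A_digits (i, j, l) = A_digits (i', j', l')"
    unfolding A_indices_def by auto
  define x y z where "x = int i - int i'" and "y = int j - int j'" and "z = int l - int l'"
  have bounds: "\<bar>x\<bar> < 5" "\<bar>y\<bar> < 3" "\<bar>z\<bar> < 2"
    using \<open>i < 5\<close> \<open>j < 3\<close> \<open>l < 2\<close> \<open>i' < 5\<close> \<open>j' < 3\<close> \<open>l' < 2\<close>
    by (auto simp: x_def y_def z_def)
  have "36 * x + 100 * y + 225 * z = 0"
    using eq by (simp add: A_digits_def x_def y_def z_def algebra_simps)
  then have "x = 0" "y = 0" "z = 0" using A_digits_diff_dvd[OF bounds] by simp_all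
  then show "p = q" using pq by (simp add: x_def y_def z_def)
qed

lemma card_A_int: "card A_int = 30"
  unfolding A_int_def using A_digits_inj
  by (simp add: card_image A_indices_def card_cartesian_product)

lemma A_int_range: "a \<in> A_int \<Longrightarrow> 0 \<le> a \<and> a < 900"
  unfolding A_int_def A_indices_def A_digits_def by auto

lemma unity_root_A_digits:
  "unity_root N (x * A_digits (i, j, l)) =
     unity_root N (36 * x) ^ i * unity_root N (100 * x) ^ j * unity_root N (225 * x) ^ l"
  by (simp add: A_digits_def unity_root_pow unity_root_add [symmetric] algebra_simps)

lemma sum_unity_root_A_int:
  "(\<Sum>a\<in>A_int. unity_root N (x * a)) =
     (\<Sum>i<5. unity_root N (36 * x) ^ i) * (\<Sum>j<3. unity_root N (100 * x) ^ j) *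
     (\<Sum>l<2. unity_root N (225 * x) ^ l)"
proof -
  have "(\<Sum>a\<in>A_int. unity_root N (x * a)) = (\<Sum>p\<in>A_indices. unity_root N (x * A_digits p))"
    unfolding A_int_def using A_digits_inj by (simp add: sum.reindex)
  also have "\<dots> = (\<Sum>i<5. \<Sum>j<3. \<Sum>l<2.
      unity_root N (36 * x) ^ i * (unity_root N (100 * x) ^ j * unity_root N (225 * x) ^ l))"
    unfolding A_indices_def sum.cartesian_product' unity_root_A_digits mult.assoc ..
  also have "\<dots> = (\<Sum>i<5. unity_root N (36 * x) ^ i *
      ((\<Sum>j<3. unity_root N (100 * x) ^ j) * (\<Sum>l<2. unity_root N (225 * x) ^ l)))"
    unfolding sum_product by (simp only: sum_distrib_left)
  also have "\<dots> = (\<Sum>i<5. unity_root N (36 * x) ^ i) * (\<Sum>j<3. unity_root N (100 * x) ^ j) *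
      (\<Sum>l<2. unity_root N (225 * x) ^ l)"
    by (simp only: sum_distrib_right mult.assoc)
  finally show ?thesis .
qed

lemma geometric_unity_root_sum_nonzero:
  assumes "N \<noteq> 0" "m > 0" "N dvd int m * r \<Longrightarrow> N dvd r"
  shows "(\<Sum>i<m. unity_root N r ^ i) \<noteq> 0"
proof (cases "unity_root N r = 1")
  case True
  then show ?thesis using assms(2) by simp
next
  case False
  then have "unity_root N r ^ m \<noteq> 1"
    using assms by (auto simp: unity_root_pow unity_root_eq_1_iff)
  then show ?thesis using False by (simp add: sum_gp_strict)
qed

lemma sum_unity_root_A_int_nonzero:
  assumes "a \<in> A_int" "a' \<in> A_int"
  shows "(\<Sum>b\<in>A_int. unity_root 900 ((a - a') * b)) \<noteq> 0"
proof -
  obtain x y z where d: "a - a' = 36 * x + 100 * y + 225 * z"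
    and bounds: "\<bar>x\<bar> < 5" "\<bar>y\<bar> < 3" "\<bar>z\<bar> < 2"
    using A_int_diff_digits[OF assms] .
  have "(\<Sum>i<5. unity_root 900 (36 * (a - a')) ^ i) \<noteq> 0"
  proof (rule geometric_unity_root_sum_nonzero)
    assume "900 dvd int 5 * (36 * (a - a'))"
    then obtain k where "int 5 * (36 * (a - a')) = 900 * k" by (elim dvdE)
    then have "a - a' = 5 * k" by simp
    then have "x = 0" using A_digits_diff_dvd(1)[OF bounds] d by simp
    then have "36 * (a - a') = 900 * (4 * y + 9 * z)" using d by simp
    then show "900 dvd 36 * (a - a')" by simp
  qed simp_all
  moreover have "(\<Sum>i<3. unity_root 900 (100 * (a - a')) ^ i) \<noteq> 0"
  proof (rule geometric_unity_root_sum_nonzero)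
    assume "900 dvd int 3 * (100 * (a - a'))"
    then obtain k where "int 3 * (100 * (a - a')) = 900 * k" by (elim dvdE)
    then have "a - a' = 3 * k" by simp
    then have "y = 0" using A_digits_diff_dvd(2)[OF bounds] d by simp
    then have "100 * (a - a') = 900 * (4 * x + 25 * z)" using d by simp
    then show "900 dvd 100 * (a - a')" by simp
  qed simp_all
  moreover have "(\<Sum>i<2. unity_root 900 (225 * (a - a')) ^ i) \<noteq> 0"
  proof (rule geometric_unity_root_sum_nonzero)
    assume "900 dvd int 2 * (225 * (a - a'))"
    then obtain k where "int 2 * (225 * (a - a')) = 900 * k" by (elim dvdE)
    then have "a - a' = 2 * k" by simp
    then have "z = 0" using A_digits_diff_dvd(3)[OF bounds] d by simp
    then have "225 * (a - a') = 900 * (9 * x + 25 * y)" using d by simp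
    then show "900 dvd 225 * (a - a')" by simp
  qed simp_all
  ultimately show ?thesis unfolding sum_unity_root_A_int by simp
qed

lemma expo_mult: "expo l x * expo m x = expo (l + m) x"
  by (simp add: expo_def cis_mult distrib_left distrib_right)

lemma norm_expo [simp]: "norm (expo l x) = 1"
  by (simp add: expo_def)

lemma continuous_on_expo: "continuous_on S (expo l)"
  unfolding expo_def by (intro continuous_intros)

lemma borel_measurable_continuous_lebesgue:
  fixes f :: "real \<Rightarrow> 'b::topological_space"
  assumes "continuous_on UNIV f"
  shows "f \<in> borel_measurable lebesgue"
proof -
  have "f \<in> lborel \<rightarrow>\<^sub>M borel" using borel_measurable_continuous_onI[OF assms] by simp
  then show ?thesis by (rule measurable_completion)
qed

lemma expo_measurable [measurable]: "expo l \<in> borel_measurable lebesgue"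
  by (rule borel_measurable_continuous_lebesgue) (rule continuous_on_expo)

inductive trig_poly :: "real \<Rightarrow> (real \<Rightarrow> complex) \<Rightarrow> bool" for c where
  monomial: "trig_poly c (\<lambda>y. d * expo (c * of_int k) y)"
| add: "trig_poly c f \<Longrightarrow> trig_poly c g \<Longrightarrow> trig_poly c (\<lambda>y. f y + g y)"

lemma trig_poly_const: "trig_poly c (\<lambda>y. d)"
  using trig_poly.monomial[of c d 0] by (simp add: expo_def)

lemma trig_poly_mult:
  assumes "trig_poly c f" "trig_poly c g"
  shows "trig_poly c (\<lambda>y. f y * g y)"
  using assms
proof (induction rule: trig_poly.induct)
  case (monomial d k)
  from monomial.prems show ?case
  proof (induction rule: trig_poly.induct)
    case (monomial d' k')
    have "d * expo (c * of_int k) y * (d' * expo (c * of_int k') y) =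
        (d * d') * expo (c * of_int (k + k')) y" for y
      unfolding of_int_add distrib_left expo_mult [symmetric] by (simp add: mult_ac)
    then show ?case by (simp only:) (rule trig_poly.monomial)
  next
    case (add g1 g2)
    then show ?case by (simp add: distrib_left trig_poly.add)
  qed
next
  case (add f1 f2)
  then show ?case by (simp add: distrib_right trig_poly.add)
qed

lemma trig_poly_cos: "trig_poly c (\<lambda>y. complex_of_real (cos (2 * pi * c * y)))"
proof -
  have "complex_of_real (cos (2 * pi * c * y)) =
      (1/2) * expo (c * of_int 1) y + (1/2) * expo (c * of_int (-1)) y" for y
    by (simp add: expo_def cis.ctr complex_eq_iff)
  then show ?thesis by (simp only:) (intro trig_poly.add trig_poly.monomial)
qed

lemma trig_poly_sin: "trig_poly c (\<lambda>y. complex_of_real (sin (2 * pi * c * y)))"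
proof -
  have "complex_of_real (sin (2 * pi * c * y)) =
      (- \<i>/2) * expo (c * of_int 1) y + (\<i>/2) * expo (c * of_int (-1)) y" for y
    by (simp add: expo_def cis.ctr complex_eq_iff)
  then show ?thesis by (simp only:) (intro trig_poly.add trig_poly.monomial)
qed

lemma trig_poly_real_polynomial:
  assumes "real_polynomial_function q"
  shows "trig_poly c (\<lambda>y. complex_of_real (q (expo c y)))"
  using assms
proof (induction rule: real_polynomial_function.induct)
  case (linear f)
  interpret bounded_linear f by fact
  have decomp: "f z = Re z * f 1 + Im z * f \<i>" for z
  proof -
    have "z = Re z *\<^sub>R 1 + Im z *\<^sub>R \<i>" by (simp add: complex_eq_iff)
    then have "f z = f (Re z *\<^sub>R 1 + Im z *\<^sub>R \<i>)" by simp
    also have "\<dots> = Re z *\<^sub>R f 1 + Im z *\<^sub>R f \<i>" by (simp add: add scale)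
    finally show ?thesis by simp
  qed
  have "complex_of_real (f (expo c y)) =
      complex_of_real (f 1) * complex_of_real (cos (2 * pi * c * y)) +
      complex_of_real (f \<i>) * complex_of_real (sin (2 * pi * c * y))" for y
    unfolding decomp[of "expo c y"] by (simp add: expo_def mult.commute)
  then show ?case
    by (simp only:) (intro trig_poly.add trig_poly_mult trig_poly_const trig_poly_cos trig_poly_sin)
next
  case (const d)
  show ?case by (rule trig_poly_const)
next
  case (add f g)
  show ?case unfolding of_real_add by (rule trig_poly.add[OF add.IH])
next
  case (mult f g)
  show ?case unfolding of_real_mult by (rule trig_poly_mult[OF mult.IH])
qed

lemma trig_poly_polynomial:
  assumes "polynomial_function p"
  shows "trig_poly c (\<lambda>y. p (expo c y))"
proof -
  have "real_polynomial_function (Re \<circ> p)" "real_polynomial_function (Im \<circ> p)"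
    using assms bounded_linear_Re bounded_linear_Im unfolding polynomial_function_def by blast+
  then have "trig_poly c (\<lambda>y. complex_of_real (Re (p (expo c y))))"
    "trig_poly c (\<lambda>y. complex_of_real (Im (p (expo c y))))"
    by (auto dest!: trig_poly_real_polynomial[where c = c] simp: comp_def)
  then have "trig_poly c (\<lambda>y. complex_of_real (Re (p (expo c y))) +
      \<i> * complex_of_real (Im (p (expo c y))))"
    by (intro trig_poly.add trig_poly_mult trig_poly_const)
  then show ?thesis by (simp add: complex_eq [symmetric])
qed

lemma integral_mult_trig_poly_eq_0:
  fixes H :: "real \<Rightarrow> complex"
  assumes H: "integrable lebesgue H"
    and coeffs: "\<And>k::int. (LINT y|lebesgue. H y * expo (c * of_int k) y) = 0"
    and "trig_poly c \<phi>"
  shows "integrable lebesgue (\<lambda>y. H y * \<phi> y) \<and> (LINT y|lebesgue. H y * \<phi> y) = 0"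
  using \<open>trig_poly c \<phi>\<close>
proof (induction rule: trig_poly.induct)
  case (monomial d k)
  have [measurable]: "H \<in> borel_measurable lebesgue" using H by (rule borel_measurable_integrable)
  have "integrable lebesgue (\<lambda>y. H y * expo (c * of_int k) y)"
    by (rule Bochner_Integration.integrable_bound[OF H]) (measurable, simp add: norm_mult)
  then show ?case using coeffs[of k] by (simp add: mult.left_commute[of _ d])
next
  case (add f g)
  then show ?case by (simp add: distrib_left)
qed

lemma integrable_mult_circle_fun:
  fixes H :: "real \<Rightarrow> complex" and g :: "complex \<Rightarrow> complex"
  assumes H: "integrable lebesgue H" and g: "continuous_on (sphere 0 1) g"
  shows "integrable lebesgue (\<lambda>y. H y * g (expo c y))"
proof -
  have [measurable]: "H \<in> borel_measurable lebesgue" using H by (rule borel_measurable_integrable)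
  obtain B where B: "\<And>z. z \<in> sphere 0 1 \<Longrightarrow> norm (g z) \<le> B"
    using compact_imp_bounded[OF compact_continuous_image[OF g compact_sphere]]
    unfolding bounded_iff by blast
  have "continuous_on UNIV (\<lambda>y. g (expo c y))"
    by (rule continuous_on_compose2[OF g continuous_on_expo]) auto
  then have [measurable]: "(\<lambda>y. g (expo c y)) \<in> borel_measurable lebesgue"
    by (rule borel_measurable_continuous_lebesgue)
  have "norm (H y * g (expo c y)) \<le> norm (of_real B * H y)" for y
  proof -
    have "norm (g (expo c y)) \<le> \<bar>B\<bar>" using B[of "expo c y"] by simp
    then have "norm (H y) * norm (g (expo c y)) \<le> norm (H y) * \<bar>B\<bar>" by (simp add: mult_left_mono)
    then show ?thesis by (simp add: norm_mult mult.commute)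
  qed
  then show ?thesis
    by (intro Bochner_Integration.integrable_bound[OF integrable_mult_right[OF H, of "of_real B"]] AE_I2)
      measurable
qed

lemma norm_integral_mult_circle_fun_le:
  fixes H :: "real \<Rightarrow> complex" and g :: "complex \<Rightarrow> complex"
  assumes H: "integrable lebesgue H"
    and coeffs: "\<And>k::int. (LINT y|lebesgue. H y * expo (c * of_int k) y) = 0"
    and g: "continuous_on (sphere 0 1) g" and "e > 0"
  shows "norm (LINT y|lebesgue. H y * g (expo c y)) \<le> e * (LINT y|lebesgue. norm (H y))"
proof -
  obtain p where p: "polynomial_function p" and pe: "\<forall>z\<in>sphere 0 1. norm (g z - p z) < e"
    using Stone_Weierstrass_polynomial_function[OF compact_sphere g \<open>e > 0\<close>] by blast
  note int_g = integrable_mult_circle_fun[OF H g]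
  have int_p: "integrable lebesgue (\<lambda>y. H y * p (expo c y))"
    and zero_p: "(LINT y|lebesgue. H y * p (expo c y)) = 0"
    using integral_mult_trig_poly_eq_0[OF H coeffs trig_poly_polynomial[OF p]] by auto
  have "(LINT y|lebesgue. H y * g (expo c y)) = (LINT y|lebesgue. H y * (g (expo c y) - p (expo c y)))"
    using Bochner_Integration.integral_diff[OF int_g int_p] zero_p by (simp add: right_diff_distrib)
  also have "norm \<dots> \<le> (LINT y|lebesgue. e * norm (H y))"
  proof (rule Bochner_Integration.integral_norm_bound_integral)
    show "integrable lebesgue (\<lambda>y. e * norm (H y))" using H by simp
    show "norm (H y * (g (expo c y) - p (expo c y))) \<le> e * norm (H y)" for y
    proof -
      have "norm (g (expo c y) - p (expo c y)) \<le> e" using pe by (simp add: less_imp_le)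
      then have "norm (H y) * norm (g (expo c y) - p (expo c y)) \<le> norm (H y) * e"
        by (simp add: mult_left_mono)
      then show ?thesis by (simp add: norm_mult mult.commute)
    qed
  qed (use Bochner_Integration.integrable_diff[OF int_g int_p] in \<open>simp add: right_diff_distrib\<close>)
  finally show ?thesis by simp
qed

lemma integral_mult_circle_fun_eq_0:
  fixes H :: "real \<Rightarrow> complex" and g :: "complex \<Rightarrow> complex"
  assumes H: "integrable lebesgue H"
    and coeffs: "\<And>k::int. (LINT y|lebesgue. H y * expo (c * of_int k) y) = 0"
    and g: "continuous_on (sphere 0 1) g"
  shows "(LINT y|lebesgue. H y * g (expo c y)) = 0"
proof -
  define M where "M = (LINT y|lebesgue. norm (H y))"
  have "M \<ge> 0" by (simp add: M_def)
  have "norm (LINT y|lebesgue. H y * g (expo c y)) \<le> 0 + e" if "e > 0" for e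
  proof -
    have "e / (M + 1) > 0" using \<open>e > 0\<close> \<open>M \<ge> 0\<close> by simp
    then have "norm (LINT y|lebesgue. H y * g (expo c y)) \<le> e / (M + 1) * M"
      unfolding M_def by (rule norm_integral_mult_circle_fun_le[OF H coeffs g])
    moreover have "e / (M + 1) * M \<le> e" using \<open>e > 0\<close> \<open>M \<ge> 0\<close> by (simp add: field_simps)
    ultimately show ?thesis by simp
  qed
  then show ?thesis using field_le_epsilon[of _ 0] by (metis norm_le_zero_iff)
qed

lemma inj_on_cis: "inj_on cis {0..<2 * pi}"
  by (rule inj_onI) (metis Arg2pi_unique atLeastLessThan_iff cis_conv_exp mult_1 of_real_1 zero_less_one)

lemma circle_arc_indicator_limit:
  assumes "c > 0" "0 \<le> w" "w < 1/c"
  obtains g :: "nat \<Rightarrow> complex \<Rightarrow> complex"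
  where "\<And>n. continuous_on UNIV (g n)" "\<And>n z. norm (g n z) \<le> 1"
    and "\<And>y. 0 \<le> y \<Longrightarrow> y < 1/c \<Longrightarrow> (\<lambda>n. g n (expo c y)) \<longlonglongrightarrow> indicator {..w} y"
proof
  define K where "K = expo c ` {0..w}"
  have "compact K" unfolding K_def by (intro compact_continuous_image continuous_on_expo) auto
  then have "closed K" by (rule compact_imp_closed)
  have "K \<noteq> {}" using assms(2) unfolding K_def by auto
  define g where "g n z = complex_of_real (max 0 (1 - real n * infdist z K))" for n z
  show "continuous_on UNIV (g n)" for n unfolding g_def by (intro continuous_intros)
  show "norm (g n z) \<le> 1" for n z using infdist_nonneg[of z K] by (simp add: g_def)
  have arc: "expo c y \<in> K \<longleftrightarrow> y \<le> w" if "0 \<le> y" "y < 1/c" for y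
  proof
    assume "expo c y \<in> K"
    then obtain y' where y': "y' \<in> {0..w}" "cis (2 * pi * c * y) = cis (2 * pi * c * y')"
      unfolding K_def expo_def by auto
    have "c * y < 1" "c * y' < 1"
      using assms that y' by (auto simp: field_simps intro: le_less_trans[OF mult_left_mono])
    then have "2 * pi * c * y \<in> {0..<2 * pi}" "2 * pi * c * y' \<in> {0..<2 * pi}"
      using assms that y' by (auto simp: mult.assoc)
    then have "2 * pi * c * y = 2 * pi * c * y'" using inj_on_cis y'(2) by (auto dest: inj_onD)
    then show "y \<le> w" using assms(1) y' by simp
  qed (use that in \<open>auto simp: K_def\<close>)
  show "(\<lambda>n. g n (expo c y)) \<longlonglongrightarrow> indicator {..w} y" if "0 \<le> y" "y < 1/c" for y
  proof (cases "y \<le> w")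
    case True
    then show ?thesis using arc[OF that] by (simp add: g_def)
  next
    case False
    then have "infdist (expo c y) K > 0"
      using arc[OF that] infdist_pos_not_in_closed[OF \<open>closed K\<close> \<open>K \<noteq> {}\<close>] by auto
    then have "eventually (\<lambda>n. real n * infdist (expo c y) K > 1) sequentially"
      by (intro eventually_sequentiallyI[of "nat \<lceil>2 / infdist (expo c y) K\<rceil>"])
         (auto simp: field_simps dest!: le_nat_iff[THEN iffD1] ceiling_le_iff[THEN iffD1])
    then have "eventually (\<lambda>n. g n (expo c y) = 0) sequentially"
      by eventually_elim (simp add: g_def)
    then show ?thesis using False by (simp add: tendsto_eventually)
  qed
qed

lemma set_integral_atMost_eq_0:
  fixes H :: "real \<Rightarrow> complex"
  assumes "c > 0" and H: "integrable lebesgue H"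
    and supp: "\<And>y. y \<notin> {0..<1/c} \<Longrightarrow> H y = 0"
    and coeffs: "\<And>k::int. (LINT y|lebesgue. H y * expo (c * of_int k) y) = 0"
  shows "(LINT y:{..w}|lebesgue. H y) = 0"
proof -
  have [measurable]: "H \<in> borel_measurable lebesgue" using H by (rule borel_measurable_integrable)
  have total: "(LINT y|lebesgue. H y) = 0" using coeffs[of 0] by (simp add: expo_def)
  consider "w < 0" | "1/c \<le> w" | "0 \<le> w" "w < 1/c" by linarith
  then show ?thesis
  proof cases
    case 1
    then have "(\<lambda>y. indicator {..w} y *\<^sub>R H y) = (\<lambda>y. 0)" using supp by (auto simp: indicator_def)
    then show ?thesis by (simp add: set_lebesgue_integral_def)
  next
    case 2
    then have "indicator {..w} y *\<^sub>R H y = H y" for y using supp[of y] by (auto simp: indicator_def)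
    then show ?thesis using total by (simp add: set_lebesgue_integral_def)
  next
    case 3
    obtain g :: "nat \<Rightarrow> complex \<Rightarrow> complex" where g: "\<And>n. continuous_on UNIV (g n)" "\<And>n z. norm (g n z) \<le> 1"
      and lim: "\<And>y. 0 \<le> y \<Longrightarrow> y < 1/c \<Longrightarrow> (\<lambda>n. g n (expo c y)) \<longlonglongrightarrow> indicator {..w} y"
      using circle_arc_indicator_limit[OF \<open>c > 0\<close> 3] by blast
    have [measurable]: "(\<lambda>y. g n (expo c y)) \<in> borel_measurable lebesgue" for n
      by (intro borel_measurable_continuous_lebesgue continuous_on_compose2[OF g(1) continuous_on_expo]) auto
    have "(\<lambda>n. LINT y|lebesgue. H y * g n (expo c y)) \<longlonglongrightarrow> (LINT y|lebesgue. indicator {..w} y *\<^sub>R H y)"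
    proof (rule integral_dominated_convergence[where w = "\<lambda>y. norm (H y)"])
      show "AE y in lebesgue. (\<lambda>n. H y * g n (expo c y)) \<longlonglongrightarrow> indicator {..w} y *\<^sub>R H y"
      proof (rule AE_I2)
        fix y
        show "(\<lambda>n. H y * g n (expo c y)) \<longlonglongrightarrow> indicator {..w} y *\<^sub>R H y"
        proof (cases "0 \<le> y \<and> y < 1/c")
          case True
          then have "(\<lambda>n. H y * g n (expo c y)) \<longlonglongrightarrow> H y * indicator {..w} y"
            by (intro tendsto_mult tendsto_const lim) auto
          moreover have "H y * indicator {..w} y = indicator {..w} y *\<^sub>R H y"
            by (simp add: indicator_def)
          ultimately show ?thesis by simp
        qed (use supp in auto)
      qed
      show "AE y in lebesgue. norm (H y * g n (expo c y)) \<le> norm (H y)" for n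
        using g(2) by (intro AE_I2) (simp add: norm_mult mult_left_le)
      show "(\<lambda>y. indicator {..w} y *\<^sub>R H y) \<in> borel_measurable lebesgue"
        by (intro borel_measurable_scaleR borel_measurable_indicator) simp_all
      show "(\<lambda>y. H y * g n (expo c y)) \<in> borel_measurable lebesgue" for n
        by measurable
      show "integrable lebesgue (\<lambda>y. norm (H y))" using H by simp
    qed
    moreover have "(LINT y|lebesgue. H y * g n (expo c y)) = 0" for n
      by (rule integral_mult_circle_fun_eq_0[OF H coeffs continuous_on_subset[OF g(1)]]) simp
    ultimately show ?thesis by (simp add: set_lebesgue_integral_def LIMSEQ_const_iff)
  qed
qed

lemma set_integral_borel_eq_0:
  fixes H :: "real \<Rightarrow> complex"
  assumes H: "integrable lebesgue H" and total: "(LINT y|lebesgue. H y) = 0"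
    and atMost: "\<And>w. (LINT y:{..w}|lebesgue. H y) = 0"
    and "B \<in> sets borel"
  shows "(LINT y:B|lebesgue. H y) = 0"
proof -
  have sets_borel: "sets borel = sigma_sets (UNIV :: real set) (range atMost)"
    by (subst borel_eq_atMost) (simp add: sets_measure_of)
  have lebesgue: "A \<in> sets borel \<Longrightarrow> A \<in> sets lebesgue" for A
    by (simp add: sets_completionI_sets)
  have int: "set_integrable lebesgue A H" if "A \<in> sets borel" for A
    unfolding set_integrable_def using lebesgue[OF that] H by (rule integrable_mult_indicator)
  have "Int_stable (range (atMost :: real \<Rightarrow> real set))"
    unfolding Int_stable_def by (auto intro: image_eqI[where x = "min _ _"])
  moreover have "range atMost \<subseteq> Pow (UNIV :: real set)" by simp
  moreover have "B \<in> sigma_sets UNIV (range atMost)" using \<open>B \<in> sets borel\<close> sets_borel by simp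
  ultimately show ?thesis
  proof (induction rule: sigma_sets_induct_disjoint)
    case (compl A)
    then have "A \<in> sets borel" using sets_borel by simp
    have "(LINT y:UNIV - A|lebesgue. H y) = (LINT y|lebesgue. H y) - (LINT y:A|lebesgue. H y)"
      using Bochner_Integration.integral_diff[OF H int[OF \<open>A \<in> sets borel\<close>, unfolded set_integrable_def]]
      by (simp add: set_lebesgue_integral_def indicator_diff scaleR_diff_left)
    then show ?case using compl(2) total by simp
  next
    case (union A)
    then have "A i \<in> sets borel" for i using sets_borel by auto
    then have "(LINT y:(\<Union>i. A i)|lebesgue. H y) = (\<Sum>i. LINT y:A i|lebesgue. H y)"
      using union(1) by (intro lebesgue_integral_countable_add lebesgue int)
        (auto simp: disjoint_family_on_def)
    then show ?case using union(3) by simp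
  next
    case (basic A)
    then show ?case using atMost by auto
  next
    case empty
    show ?case by (simp add: set_lebesgue_integral_def)
  qed
qed

lemma sigma_finite_lebesgue: "sigma_finite_measure (lebesgue :: 'a::euclidean_space measure)"
proof -
  obtain A :: "'a set set" where A: "countable A" "A \<subseteq> sets lborel" "\<Union>A = UNIV"
    "\<forall>a\<in>A. emeasure lborel a \<noteq> \<infinity>"
    using sigma_finite_measure.sigma_finite_countable[OF sigma_finite_lborel] by auto
  have "emeasure lebesgue a = emeasure lborel a" if "a \<in> A" for a
    using that A(2) by (simp add: sets_completionI_sets subset_iff)
  moreover have "A \<subseteq> sets lebesgue" using A(2) sets_completionI_sets by blast
  ultimately show ?thesis
    unfolding sigma_finite_measure_def using A by (intro exI[of _ A]) auto
qed

lemma AE_eq_0_if_set_integrals_borel_eq_0: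
  fixes H :: "real \<Rightarrow> complex"
  assumes H: "integrable lebesgue H"
    and borel: "\<And>B. B \<in> sets borel \<Longrightarrow> (LINT y:B|lebesgue. H y) = 0"
  shows "AE y in lebesgue. H y = 0"
proof (rule sigma_finite_measure.density_zero[OF sigma_finite_lebesgue H])
  have [measurable]: "H \<in> borel_measurable lebesgue" using H by (rule borel_measurable_integrable)
  fix A :: "real set" assume "A \<in> sets lebesgue"
  then obtain B N N' where "A = B \<union> N" "N \<subseteq> N'" "N' \<in> null_sets lborel" "B \<in> sets lborel"
    by (elim sets_completionE) blast
  have "AE y in lebesgue. y \<notin> N'"
    by (rule AE_not_in) (rule null_sets_completionI[OF \<open>N' \<in> null_sets lborel\<close>])
  then have "AE y in lebesgue. indicator A y *\<^sub>R H y = indicator B y *\<^sub>R H y"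
    by eventually_elim (use \<open>A = B \<union> N\<close> \<open>N \<subseteq> N'\<close> in \<open>auto simp: indicator_def\<close>)
  moreover note \<open>A \<in> sets lebesgue\<close> [measurable]
  moreover have [measurable]: "B \<in> sets lebesgue" using \<open>B \<in> sets lborel\<close> by (rule sets_completionI_sets)
  ultimately have "(LINT y:A|lebesgue. H y) = (LINT y:B|lebesgue. H y)"
    unfolding set_lebesgue_integral_def by (intro integral_cong_AE) measurable
  then show "(LINT y:A|lebesgue. H y) = 0" using borel \<open>B \<in> sets lborel\<close> by simp
qed

theorem fourier_coeffs_eq_0_imp_AE_eq_0:
  fixes H :: "real \<Rightarrow> complex"
  assumes "c > 0" and H: "integrable lebesgue H"
    and supp: "\<And>y. y \<notin> {0..<1/c} \<Longrightarrow> H y = 0"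
    and coeffs: "\<And>k::int. (LINT y|lebesgue. H y * expo (c * of_int k) y) = 0"
  shows "AE y in lebesgue. H y = 0"
proof (rule AE_eq_0_if_set_integrals_borel_eq_0[OF H])
  have "(LINT y|lebesgue. H y) = 0" using coeffs[of 0] by (simp add: expo_def)
  then show "(LINT y:B|lebesgue. H y) = 0" if "B \<in> sets borel" for B
    using set_integral_borel_eq_0[OF H _ set_integral_atMost_eq_0[OF assms] that] by blast
qed

definition fibre :: "real \<Rightarrow> real set \<Rightarrow> real \<Rightarrow> int set" where
  "fibre c \<Omega> y = {n. y + of_int n / c \<in> \<Omega>}"

definition cell :: "real \<Rightarrow> int \<Rightarrow> real set" where
  "cell c n = {of_int n / c ..< of_int n / c + 1 / c}"

lemma mem_cell_iff: "c > 0 \<Longrightarrow> x \<in> cell c n \<longleftrightarrow> \<lfloor>c * x\<rfloor> = n"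
  unfolding cell_def floor_eq_iff
  by (simp add: divide_le_eq less_divide_eq add_divide_distrib [symmetric] mult.commute)

lemma indicator_cell_translate:
  "indicator (cell c n) (y + of_int n / c) = (indicator {0..<1/c} y :: real)"
  by (simp add: cell_def indicator_def)

lemma lebesgue_integral_translate:
  fixes F :: "real \<Rightarrow> 'a::euclidean_space"
  assumes "integrable lebesgue F"
  shows "integrable lebesgue (\<lambda>x. F (x + t))" "(LINT x|lebesgue. F (x + t)) = (LINT x|lebesgue. F x)"
proof -
  have "has_bochner_integral lebesgue F (LINT x|lebesgue. F x)"
    using assms by (rule has_bochner_integral_integrable)
  then have "has_bochner_integral lebesgue (\<lambda>x. F (t + 1 * x)) ((LINT x|lebesgue. F x) /\<^sub>R \<bar>1\<bar>)"
    using has_bochner_integral_lebesgue_real_affine_iff[of 1 F _ t] by simp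
  then have "has_bochner_integral lebesgue (\<lambda>x. F (x + t)) (LINT x|lebesgue. F x)"
    by (simp add: add.commute)
  then show "integrable lebesgue (\<lambda>x. F (x + t))" "(LINT x|lebesgue. F (x + t)) = (LINT x|lebesgue. F x)"
    by (simp_all add: has_bochner_integral_iff)
qed

lemma null_sets_lebesgue_translate:
  assumes "X \<in> null_sets lebesgue"
  shows "{y::real. y + s \<in> X} \<in> null_sets lebesgue"
proof -
  have "negligible ((+) (- s) ` X)"
    using assms negligible_iff_null_sets negligible_translation by blast
  moreover have "(+) (- s) ` X = {y. y + s \<in> X}"
    by (auto intro: rev_image_eqI[of "_ + s"])
  ultimately show ?thesis using negligible_iff_null_sets by metis
qed

lemma suminf_int_decode:
  fixes h :: "int \<Rightarrow> 'a::{t2_space, comm_monoid_add}"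
  assumes "finite F" "\<And>n. n \<notin> F \<Longrightarrow> h n = 0"
  shows "(\<Sum>i. h (int_decode i)) = (\<Sum>n\<in>F. h n)"
proof -
  have "finite (int_decode -` F)" using assms(1) by (rule finite_vimageI) (simp add: inj_int_decode)
  then have "(\<Sum>i. h (int_decode i)) = (\<Sum>i\<in>int_decode -` F. h (int_decode i))"
    by (rule suminf_finite) (use assms(2) in auto)
  also have "\<dots> = (\<Sum>n\<in>int_decode ` (int_decode -` F). h n)"
    using sum.reindex[of int_decode "int_decode -` F" h] inj_int_decode by (simp add: comp_def)
  also have "int_decode ` (int_decode -` F) = F"
    using surj_int_decode by (simp add: surj_image_vimage_eq)
  finally show ?thesis .
qed

lemma summable_integral_norm_cells:
  fixes \<psi> :: "real \<Rightarrow> 'a::euclidean_space"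
  assumes "c > 0" and \<psi>: "integrable lebesgue \<psi>"
  shows "summable (\<lambda>i. LINT x|lebesgue. norm (indicator (cell c (int_decode i)) x *\<^sub>R \<psi> x))"
proof (rule summableI_nonneg_bounded)
  have int: "integrable lebesgue (\<lambda>x. norm (indicator (cell c (int_decode i)) x *\<^sub>R \<psi> x))" for i
    by (intro integrable_norm integrable_mult_indicator \<psi>) (simp add: cell_def)
  fix N
  have "disjoint_family_on (\<lambda>i. cell c (int_decode i)) {..<N}"
    using \<open>c > 0\<close> by (auto simp: disjoint_family_on_def mem_cell_iff int_decode_eq)
  then have "(\<Sum>i<N. indicator (cell c (int_decode i)) x) = (indicator (\<Union>i<N. cell c (int_decode i)) x :: real)"
    for x by (simp add: indicator_UN_disjoint)
  then have bound: "(\<Sum>i<N. norm (indicator (cell c (int_decode i)) x *\<^sub>R \<psi> x)) \<le> norm (\<psi> x)" for x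
    by (simp add: sum_distrib_right [symmetric] indicator_def)
  have "(\<Sum>i<N. LINT x|lebesgue. norm (indicator (cell c (int_decode i)) x *\<^sub>R \<psi> x))
      = (LINT x|lebesgue. (\<Sum>i<N. norm (indicator (cell c (int_decode i)) x *\<^sub>R \<psi> x)))"
    by (rule Bochner_Integration.integral_sum [symmetric]) (rule int)
  also have "\<dots> \<le> (LINT x|lebesgue. norm (\<psi> x))"
    using bound by (intro integral_mono Bochner_Integration.integrable_sum int integrable_norm \<psi>)
  finally show "(\<Sum>i<N. LINT x|lebesgue. norm (indicator (cell c (int_decode i)) x *\<^sub>R \<psi> x))
      \<le> (LINT x|lebesgue. norm (\<psi> x))" .
qed simp

lemma integral_suminf_translates:
  fixes \<psi> :: "real \<Rightarrow> 'a::euclidean_space"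
  assumes "c > 0" and \<psi>: "integrable lebesgue \<psi>"
    and fin: "AE y in lebesgue. finite {n::int. \<psi> (y + of_int n / c) \<noteq> 0}"
  shows "integrable lebesgue (\<lambda>y. indicator {0..<1/c} y *\<^sub>R (\<Sum>i. \<psi> (y + of_int (int_decode i) / c)))"
    and "(LINT y|lebesgue. indicator {0..<1/c} y *\<^sub>R (\<Sum>i. \<psi> (y + of_int (int_decode i) / c)))
      = (LINT x|lebesgue. \<psi> x)"
proof -
  define f where "f i y = indicator {0..<1/c} y *\<^sub>R \<psi> (y + of_int (int_decode i) / c)" for i y
  define g where "g i x = indicator (cell c (int_decode i)) x *\<^sub>R \<psi> x" for i x
  have int_g: "integrable lebesgue (g i)" for i
    unfolding g_def by (intro integrable_mult_indicator \<psi>) (simp add: cell_def)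
  have fg: "f i = (\<lambda>y. g i (y + of_int (int_decode i) / c))" for i
    by (simp add: fun_eq_iff f_def g_def indicator_cell_translate)
  have int_f: "integrable lebesgue (f i)" for i
    unfolding fg by (rule lebesgue_integral_translate(1)[OF int_g])
  have "(LINT y|lebesgue. f i y) = (LINT x|lebesgue. g i x)"
    "(LINT y|lebesgue. norm (f i y)) = (LINT x|lebesgue. norm (g i x))" for i
    unfolding fg by (intro lebesgue_integral_translate(2) integrable_norm int_g)+
  moreover have summable_g: "summable (\<lambda>i. LINT x|lebesgue. norm (g i x))"
    unfolding g_def by (rule summable_integral_norm_cells[OF \<open>c > 0\<close> \<psi>])
  ultimately have summable_f: "summable (\<lambda>i. LINT y|lebesgue. norm (f i y))"
    and integrals: "(\<Sum>i. LINT y|lebesgue. f i y) = (\<Sum>i. LINT x|lebesgue. g i x)" by simp_all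
  have g_0: "g i x = 0" if "i \<notin> {int_encode \<lfloor>c * x\<rfloor>}" for i x
    using that \<open>c > 0\<close> int_decode_inverse[of i] by (auto simp: g_def indicator_def mem_cell_iff)
  have "(\<Sum>i. g i x) = \<psi> x" for x
    using suminf_int_decode[of "{\<lfloor>c * x\<rfloor>}" "\<lambda>n. indicator (cell c n) x *\<^sub>R \<psi> x"] \<open>c > 0\<close>
    by (simp add: g_def mem_cell_iff)
  moreover have "summable (\<lambda>i. norm (g i x))" for x
    by (rule summable_finite[of "{int_encode \<lfloor>c * x\<rfloor>}"]) (simp_all add: g_0)
  ultimately have "(LINT x|lebesgue. \<psi> x) = (\<Sum>i. LINT x|lebesgue. g i x)"
    using integral_suminf[OF int_g AE_I2 summable_g] by simp
  moreover have summable_f_AE: "AE y in lebesgue. summable (\<lambda>i. norm (f i y))"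
    using fin
  proof eventually_elim
    case (elim y)
    then have "finite (int_decode -` {n. \<psi> (y + of_int n / c) \<noteq> 0})"
      by (rule finite_vimageI) (simp add: inj_int_decode)
    then show ?case by (rule summable_finite) (auto simp: f_def)
  qed
  moreover have "(\<Sum>i. f i y) = indicator {0..<1/c} y *\<^sub>R (\<Sum>i. \<psi> (y + of_int (int_decode i) / c))" for y
    by (cases "y \<in> {0..<1/c}") (simp_all add: f_def)
  ultimately show "integrable lebesgue (\<lambda>y. indicator {0..<1/c} y *\<^sub>R (\<Sum>i. \<psi> (y + of_int (int_decode i) / c)))"
    "(LINT y|lebesgue. indicator {0..<1/c} y *\<^sub>R (\<Sum>i. \<psi> (y + of_int (int_decode i) / c)))
      = (LINT x|lebesgue. \<psi> x)"
    using integrable_suminf[OF int_f _ summable_f] integral_suminf[OF int_f _ summable_f] integrals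
    by simp_all
qed

lemma integral_fibre_sum:
  fixes \<psi> :: "real \<Rightarrow> 'a::euclidean_space"
  assumes "c > 0" and \<psi>: "integrable lebesgue \<psi>" and supp: "\<And>x. x \<notin> \<Omega> \<Longrightarrow> \<psi> x = 0"
    and fin: "AE y in lebesgue. finite (fibre c \<Omega> y)"
  shows "integrable lebesgue (\<lambda>y. indicator {0..<1/c} y *\<^sub>R (\<Sum>n\<in>fibre c \<Omega> y. \<psi> (y + of_int n / c)))"
      (is "integrable lebesgue ?F")
    and "(LINT y|lebesgue. indicator {0..<1/c} y *\<^sub>R (\<Sum>n\<in>fibre c \<Omega> y. \<psi> (y + of_int n / c)))
      = (LINT x|lebesgue. \<psi> x)"
proof -
  have support: "{n. \<psi> (y + of_int n / c) \<noteq> 0} \<subseteq> fibre c \<Omega> y" for y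
    using supp by (auto simp: fibre_def)
  have "AE y in lebesgue. finite {n. \<psi> (y + of_int n / c) \<noteq> 0}"
    using fin by eventually_elim (rule finite_subset[OF support])
  note translates = integral_suminf_translates[OF \<open>c > 0\<close> \<psi> this]
  have ae: "AE y in lebesgue. indicator {0..<1/c} y *\<^sub>R (\<Sum>i. \<psi> (y + of_int (int_decode i) / c)) = ?F y"
    using fin
  proof eventually_elim
    case (elim y)
    have "(\<Sum>i. \<psi> (y + of_int (int_decode i) / c)) = (\<Sum>n\<in>fibre c \<Omega> y. \<psi> (y + of_int n / c))"
      by (rule suminf_int_decode[OF elim]) (simp add: fibre_def supp)
    then show ?case by simp
  qed
  have meas: "?F \<in> borel_measurable lebesgue"
    by (rule borel_measurable_AE[OF borel_measurable_integrable[OF translates(1)] ae])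
  show "integrable lebesgue ?F" by (rule integrable_cong_AE_imp[OF translates(1) meas ae])
  have "(LINT y|lebesgue. indicator {0..<1/c} y *\<^sub>R (\<Sum>i. \<psi> (y + of_int (int_decode i) / c)))
      = (LINT y|lebesgue. ?F y)"
    by (rule integral_cong_AE[OF borel_measurable_integrable[OF translates(1)] meas ae])
  then show "(LINT y|lebesgue. ?F y) = (LINT x|lebesgue. \<psi> x)" using translates(2) by simp
qed

lemma AE_if_AE_fibres:
  assumes "c > 0"
    and fibres: "AE y in lebesgue. y \<in> {0..<1/c} \<longrightarrow> (\<forall>n\<in>fibre c \<Omega> y. P (y + of_int n / c))"
  shows "AE x in lebesgue. x \<in> \<Omega> \<longrightarrow> P x"
proof -
  obtain N where N: "N \<in> null_sets lebesgue"
    and P: "\<And>y. y \<notin> N \<Longrightarrow> y \<in> {0..<1/c} \<Longrightarrow> n \<in> fibre c \<Omega> y \<Longrightarrow> P (y + of_int n / c)" for n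
    using fibres by (auto elim!: AE_E3)
  have "(\<Union>n::int. {x. x + - (of_int n / c) \<in> N}) \<in> null_sets lebesgue"
    using null_sets_lebesgue_translate[OF N] by (intro null_sets_UN) blast
  then have "AE x in lebesgue. x \<notin> (\<Union>n::int. {x. x + - (of_int n / c) \<in> N})"
    by (rule AE_not_in)
  then show ?thesis
  proof eventually_elim
    case (elim x)
    define n where "n = \<lfloor>c * x\<rfloor>"
    define y where "y = x - of_int n / c"
    have "y \<in> {0..<1/c}"
      using mem_cell_iff[OF \<open>c > 0\<close>, of x n] by (simp add: n_def y_def cell_def)
    moreover have "y \<notin> N" using elim by (auto simp: y_def)
    ultimately show ?case using P[of y n] by (simp add: y_def fibre_def)
  qed
qed

lemma AE_translates_disjoint_on_lattice:
  assumes "countable T" "tiles_with \<Omega> T"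
  shows "AE y in lebesgue. \<forall>n::int. \<forall>t\<in>T. \<forall>t'\<in>T. t \<noteq> t' \<longrightarrow>
    y + of_int n / c \<notin> (\<lambda>x. x + t) ` \<Omega> \<inter> (\<lambda>x. x + t') ` \<Omega>"
proof -
  define X where "X t t' = (\<lambda>x. x + t) ` \<Omega> \<inter> (\<lambda>x. x + t') ` \<Omega>" for t t'
  define P where "P = (UNIV :: int set) \<times> {(t, t'). t \<in> T \<and> t' \<in> T \<and> t \<noteq> t'}"
  have "countable P" unfolding P_def
    by (intro countable_SIGMA countableI_type countable_subset[OF _ countable_SIGMA[OF assms(1) assms(1)]]) auto
  moreover have "X t t' \<in> null_sets lebesgue" if "t \<in> T" "t' \<in> T" "t \<noteq> t'" for t t'
    using assms(2) that unfolding tiles_with_def X_def by blast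
  then have "{y. y + of_int n / c \<in> X t t'} \<in> null_sets lebesgue" if "(n, t, t') \<in> P" for n t t'
    using that by (auto simp: P_def intro: null_sets_lebesgue_translate)
  ultimately have "(\<Union>(n, t, t')\<in>P. {y. y + of_int n / c \<in> X t t'}) \<in> null_sets lebesgue"
    by (intro null_sets_UN') auto
  then show ?thesis
    by (rule AE_not_in[THEN eventually_mono]) (auto simp: P_def X_def)
qed

lemma tiles_with_fibres_tiles_mod:
  fixes N :: int and A :: "int set"
  assumes "N > 0" "A \<subseteq> {0..<N}"
    and tiles: "tiles_with \<Omega> {of_int n + of_int a / of_int N | n a. a \<in> A}"
  shows "AE y in lebesgue. tiles_mod N A (fibre (of_int N) \<Omega> y)"
proof -
  have N: "N \<noteq> 0" "(of_int N :: real) \<noteq> 0" using \<open>N > 0\<close> by simp_all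
  define t :: "int \<Rightarrow> int \<Rightarrow> real" where "t j a = of_int j + of_int a / of_int N" for j a
  have T_eq: "{of_int n + of_int a / of_int N | n a. a \<in> A} = (\<lambda>(j, a). t j a) ` (UNIV \<times> A)"
    by (auto simp: t_def)
  have t_inj: "j = j' \<and> a = a'" if "a \<in> A" "a' \<in> A" "t j a = t j' a'" for j j' a a'
  proof -
    from that(3) have "of_int N * t j a = of_int N * t j' a'" by simp
    then have "of_int (N * j + a) = (of_int (N * j' + a') :: real)"
      using \<open>N > 0\<close> by (simp add: t_def distrib_left)
    then have "N * j + a = N * j' + a'" by (simp only: of_int_eq_iff)
    moreover have "(N * j + a) mod N = a" "(N * j' + a') mod N = a'"
      using that(1,2) assms(2) by auto
    ultimately show ?thesis using \<open>N > 0\<close> by auto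
  qed
  have shift: "y + of_int m / of_int N - t j a = y + of_int (m - a - N * j) / of_int N" for y m j a
    by (simp add: N t_def field_simps)
  have "AE y in lebesgue. \<forall>m::int. \<forall>s\<in>(\<lambda>(j, a). t j a) ` (UNIV \<times> A). \<forall>s'\<in>(\<lambda>(j, a). t j a) ` (UNIV \<times> A).
      s \<noteq> s' \<longrightarrow> y + of_int m / of_int N \<notin> (\<lambda>x. x + s) ` \<Omega> \<inter> (\<lambda>x. x + s') ` \<Omega>"
    using tiles unfolding T_eq by (intro AE_translates_disjoint_on_lattice) auto
  then show ?thesis
  proof eventually_elim
    case (elim y)
    show "tiles_mod N A (fibre (of_int N) \<Omega> y)"
      unfolding tiles_mod_def
    proof (rule conjI; intro allI ballI impI)
      fix m :: int
      have "y + of_int m / of_int N \<in> (\<Union>s\<in>(\<lambda>(j, a). t j a) ` (UNIV \<times> A). (\<lambda>x. x + s) ` \<Omega>)"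
        using tiles unfolding tiles_with_def T_eq by simp
      then obtain x s where "x \<in> \<Omega>" "s \<in> (\<lambda>(j, a). t j a) ` (UNIV \<times> A)"
        "y + of_int m / of_int N = x + s" by blast
      moreover obtain j a where "a \<in> A" "s = t j a"
        using \<open>s \<in> (\<lambda>(j, a). t j a) ` (UNIV \<times> A)\<close> by auto
      ultimately have "y + of_int m / of_int N - t j a \<in> \<Omega>" by simp
      then have "m - a - N * j \<in> fibre (of_int N) \<Omega> y" unfolding shift fibre_def by simp
      moreover have "(m - a - N * j + a) mod N = m mod N" by (simp add: mod_eq_dvd_iff)
      ultimately show "\<exists>n\<in>fibre (of_int N) \<Omega> y. \<exists>a\<in>A. (n + a) mod N = m mod N"
        using \<open>a \<in> A\<close> by blast
    next
      fix n n' a a'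
      assume n: "n \<in> fibre (of_int N) \<Omega> y" "n' \<in> fibre (of_int N) \<Omega> y" and a: "a \<in> A" "a' \<in> A"
        and eq: "(n + a) mod N = (n' + a') mod N"
      define j j' where "j = - ((n + a) div N)" and "j' = - ((n' + a') div N)"
      have "y + of_int ((n + a) mod N) / of_int N = (y + of_int n / of_int N) + t j a"
        "y + of_int ((n' + a') mod N) / of_int N = (y + of_int n' / of_int N) + t j' a'"
        by (simp_all add: N j_def j'_def t_def field_simps minus_div_mult_eq_mod [symmetric])
      then have "y + of_int ((n + a) mod N) / of_int N \<in> (\<lambda>x. x + t j a) ` \<Omega> \<inter> (\<lambda>x. x + t j' a') ` \<Omega>"
        using n eq unfolding fibre_def by (auto intro: rev_image_eqI)
      moreover have "t j a \<in> (\<lambda>(j, a). t j a) ` (UNIV \<times> A)" "t j' a' \<in> (\<lambda>(j, a). t j a) ` (UNIV \<times> A)"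
        using a by force+
      ultimately have "t j a = t j' a'" using elim[THEN spec[of _ "(n + a) mod N"]] by blast
      then have "j = j'" "a = a'" using t_inj a by auto
      have "n + a = (n + a) div N * N + (n + a) mod N" by simp
      also have "\<dots> = (n' + a') div N * N + (n' + a') mod N" using \<open>j = j'\<close> eq by (simp add: j_def j'_def)
      also have "\<dots> = n' + a'" by simp
      finally have "n + a = n' + a'" .
      then show "n = n' \<and> a = a'" using \<open>a = a'\<close> by simp
    qed
  qed
qed

lemma expo_shift:
  "N \<noteq> 0 \<Longrightarrow> expo (of_int \<mu>) (y + of_int n / of_int N) = expo (of_int \<mu>) y * unity_root N (\<mu> * n)"
  by (simp add: expo_def unity_root_def cis_mult [symmetric] algebra_simps)

lemma set_integral_expo_period_eq_0:
  assumes "c > 0" "k \<noteq> 0"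
  shows "(LINT y:{0..<1/c}|lebesgue. expo (c * of_int k) y) = 0"
proof -
  define l where "l = 2 * pi * c * of_int k"
  have "l \<noteq> 0" using assms by (simp add: l_def)
  have expo_l: "expo (c * of_int k) = (\<lambda>y. cis (l * y))"
    by (simp add: fun_eq_iff expo_def l_def mult_ac)
  define F where "F y = (- \<i> / complex_of_real l) * cis (l * y)" for y
  have "(F has_vector_derivative cis (l * y)) (at y within {0..1/c})" for y
    unfolding F_def has_vector_derivative_def using \<open>l \<noteq> 0\<close>
    by (auto intro!: derivative_eq_intros ext simp: field_simps scaleR_conv_of_real)
  then have FTC: "((\<lambda>y. cis (l * y)) has_integral (F (1/c) - F 0)) {0..1/c}"
    using assms(1) by (intro fundamental_theorem_of_calculus) auto
  have "cis (2 * pi * of_int k) = 1" by (rule cis_multiple_2pi) simp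
  then have "F (1/c) = F 0" using assms(1) by (simp add: F_def l_def mult.assoc)
  have "continuous_on (cbox 0 (1/c)) (\<lambda>y. cis (l * y))" by (intro continuous_intros)
  then have "set_integrable lebesgue {0..1/c} (\<lambda>y. cis (l * y))"
    using absolutely_integrable_continuous by (metis cbox_interval)
  then have "((\<lambda>y. cis (l * y)) has_integral (LINT y:{0..1/c}|lebesgue. cis (l * y))) {0..1/c}"
    by (rule has_integral_set_lebesgue)
  then have "(LINT y:{0..1/c}|lebesgue. cis (l * y)) = 0"
    using has_integral_unique[OF _ FTC] \<open>F (1/c) = F 0\<close> by simp
  moreover have "(\<lambda>y. cis (l * y)) \<in> borel_measurable lebesgue"
    by (intro borel_measurable_continuous_lebesgue continuous_intros)
  then have "(LINT y:{0..<1/c}|lebesgue. cis (l * y)) = (LINT y:{0..1/c}|lebesgue. cis (l * y))"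
  proof (intro set_integral_cong_set)
    show "AE y in lebesgue. y \<in> {0..1/c} \<longleftrightarrow> y \<in> {0..<1/c}"
      using AE_completion[OF AE_lborel_singleton[of "1/c"]] by eventually_elim auto
  qed (simp_all add: set_borel_measurable_def borel_measurable_scaleR borel_measurable_indicator)
  ultimately show ?thesis unfolding expo_l by simp
qed

lemma L2_on_integrable:
  assumes "L2_on \<Omega> f" "\<Omega> \<in> sets lebesgue" "emeasure lebesgue \<Omega> < \<infinity>"
  shows "integrable lebesgue (\<lambda>x. indicator \<Omega> x *\<^sub>R f x)"
proof (rule Bochner_Integration.integrable_bound)
  show "integrable lebesgue (\<lambda>x. indicator \<Omega> x + indicator \<Omega> x *\<^sub>R (cmod (f x))\<^sup>2)"
    using assms by (intro Bochner_Integration.integrable_add)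
      (simp_all add: integrable_indicator_iff L2_on_def set_integrable_def)
  show "(\<lambda>x. indicator \<Omega> x *\<^sub>R f x) \<in> borel_measurable lebesgue"
    using assms(1) by (simp add: L2_on_def set_borel_measurable_def)
  have "cmod z \<le> 1 + (cmod z)\<^sup>2" for z
  proof -
    have "0 \<le> (cmod z - 1)\<^sup>2" by simp
    moreover have "(cmod z - 1)\<^sup>2 = (cmod z)\<^sup>2 - 2 * cmod z + 1" by (simp add: power2_diff)
    ultimately show ?thesis using norm_ge_zero[of z] by linarith
  qed
  then show "AE x in lebesgue. norm (indicator \<Omega> x *\<^sub>R f x) \<le> norm (indicator \<Omega> x + indicator \<Omega> x *\<^sub>R (cmod (f x))\<^sup>2)"
    by (intro AE_I2) (simp add: indicator_def)
qed

lemma integral_fibre_sum_expo: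
  fixes g :: "real \<Rightarrow> complex"
  assumes "N > 0" and g: "integrable lebesgue g" and supp: "\<And>x. x \<notin> \<Omega> \<Longrightarrow> g x = 0"
    and fin: "AE y in lebesgue. finite (fibre (of_int N) \<Omega> y)"
  shows "integrable lebesgue (\<lambda>y. indicator {0..<1 / of_int N} y *\<^sub>R (expo (of_int \<mu>) y *
      (\<Sum>n\<in>fibre (of_int N) \<Omega> y. g (y + of_int n / of_int N) * unity_root N (\<mu> * n))))"
    and "(LINT y|lebesgue. indicator {0..<1 / of_int N} y *\<^sub>R (expo (of_int \<mu>) y *
      (\<Sum>n\<in>fibre (of_int N) \<Omega> y. g (y + of_int n / of_int N) * unity_root N (\<mu> * n))))
      = (LINT x|lebesgue. g x * expo (of_int \<mu>) x)"
proof -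
  have [measurable]: "g \<in> borel_measurable lebesgue" using g by (rule borel_measurable_integrable)
  have "integrable lebesgue (\<lambda>x. g x * expo (of_int \<mu>) x)"
    by (rule Bochner_Integration.integrable_bound[OF g]) (measurable, simp add: norm_mult)
  note sums = integral_fibre_sum[OF _ this, of "of_int N" \<Omega>]
  have "(\<Sum>n\<in>F. g (y + of_int n / of_int N) * expo (of_int \<mu>) (y + of_int n / of_int N)) =
      expo (of_int \<mu>) y * (\<Sum>n\<in>F. g (y + of_int n / of_int N) * unity_root N (\<mu> * n))" for F y
    using \<open>N > 0\<close> by (simp add: expo_shift sum_distrib_left mult_ac)
  with sums show "integrable lebesgue (\<lambda>y. indicator {0..<1 / of_int N} y *\<^sub>R (expo (of_int \<mu>) y *
      (\<Sum>n\<in>fibre (of_int N) \<Omega> y. g (y + of_int n / of_int N) * unity_root N (\<mu> * n))))"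
    "(LINT y|lebesgue. indicator {0..<1 / of_int N} y *\<^sub>R (expo (of_int \<mu>) y *
      (\<Sum>n\<in>fibre (of_int N) \<Omega> y. g (y + of_int n / of_int N) * unity_root N (\<mu> * n))))
      = (LINT x|lebesgue. g x * expo (of_int \<mu>) x)"
    using \<open>N > 0\<close> supp fin by simp_all
qed

lemma tiling_set_A_eq:
  "{of_int n + a / 900 | n a. a \<in> set_A} = {of_int n + of_int a / of_int 900 | n a. a \<in> A_int}"
  by (auto simp: set_A_eq)

lemma spectrum_A_eq:
  "{900 * of_int k + a | k a. a \<in> set_A} = {of_int (900 * k + a) | k a. a \<in> A_int}"
  by (auto simp: set_A_eq)

lemma tiles_A_fibres:
  assumes "tiles_with \<Omega> {of_int n + a / 900 | n a. a \<in> set_A}"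
  shows "AE y in lebesgue. tiles_mod 900 A_int (fibre 900 \<Omega> y)"
proof -
  have "A_int \<subseteq> {0..<900}" using A_int_range by auto
  then show ?thesis using tiles_with_fibres_tiles_mod[of 900 A_int \<Omega>] assms
    by (simp add: tiling_set_A_eq)
qed

lemma tiles_mod_A_int_card:
  assumes "tiles_mod 900 A_int S"
  shows "finite S" "card S = 30"
  using tiles_mod_card[OF _ assms] card_A_int by simp_all

lemma tiles_mod_A_int_orthogonal:
  assumes "tiles_mod 900 A_int S" "a \<in> A_int" "a' \<in> A_int" "a \<noteq> a'"
  shows "(\<Sum>n\<in>S. unity_root 900 ((a - a') * n)) = 0"
  using tiles_mod_orthogonal[OF _ assms] sum_unity_root_A_int_nonzero[OF assms(2,3)] by simp

lemma tiles_mod_A_int_coefficients_eq_0: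
  fixes v :: "int \<Rightarrow> complex"
  assumes "tiles_mod 900 A_int S" "\<forall>a\<in>A_int. (\<Sum>n\<in>S. v n * unity_root 900 (- a * n)) = 0" "n \<in> S"
  shows "v n = 0"
proof -
  have "finite A_int" unfolding A_int_def A_indices_def by simp
  moreover have "card S = CARD(30)" "card A_int = CARD(30)"
    using tiles_mod_A_int_card[OF assms(1)] card_A_int by simp_all
  ultimately show ?thesis
    using orthogonal_unity_roots_complete[OF tiles_mod_A_int_card(1)[OF assms(1)] _ _ _ _ assms(2,3)]
      tiles_mod_A_int_orthogonal[OF assms(1)] by blast
qed

lemma expo_mult_cnj: "expo l x * cnj (expo m x) = expo (l - m) x"
  by (simp add: expo_def cis_cnj cis_mult algebra_simps)

lemma tiles_A_orthogonal:
  assumes tiles: "tiles_with \<Omega> {of_int n + a / 900 | n a. a \<in> set_A}"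
    and A: "a \<in> A_int" "a' \<in> A_int" and ne: "900 * k + a \<noteq> 900 * k' + a'"
  shows "L2_inner \<Omega> (expo (of_int (900 * k + a))) (expo (of_int (900 * k' + a'))) = 0"
proof -
  define \<mu> where "\<mu> = (900 * k + a) - (900 * k' + a')"
  define g where "g = (\<lambda>x. complex_of_real (indicator \<Omega> x))"
  have "\<Omega> \<in> sets lebesgue" "emeasure lebesgue \<Omega> < \<infinity>" using tiles by (auto simp: tiles_with_def)
  then have g: "integrable lebesgue g" by (simp add: g_def integrable_indicator_iff)
  have supp: "g x = 0" if "x \<notin> \<Omega>" for x using that by (simp add: g_def)
  have fibres: "AE y in lebesgue. tiles_mod 900 A_int (fibre 900 \<Omega> y)" by (rule tiles_A_fibres[OF tiles])
  then have fin: "AE y in lebesgue. finite (fibre 900 \<Omega> y)"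
    by eventually_elim (rule tiles_mod_A_int_card)
  have "AE y in lebesgue. (\<Sum>n\<in>fibre 900 \<Omega> y. g (y + of_int n / 900) * unity_root 900 (\<mu> * n))
      = (if a = a' then 30 else 0)"
    using fibres
  proof eventually_elim
    case (elim y)
    have "g (y + of_int n / 900) * unity_root 900 (\<mu> * n) = unity_root 900 ((a - a') * n)"
      if "n \<in> fibre 900 \<Omega> y" for n
    proof -
      have "\<mu> * n = (a - a') * n + 900 * ((k - k') * n)" by (simp add: \<mu>_def algebra_simps)
      then show ?thesis using that by (simp add: g_def fibre_def unity_root_add)
    qed
    then show ?case
      using tiles_mod_A_int_orthogonal[OF elim A] tiles_mod_A_int_card[OF elim] by simp
  qed
  then have ae: "AE y in lebesgue. indicator {0..<1/900} y *\<^sub>R (expo (of_int \<mu>) y *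
      (\<Sum>n\<in>fibre 900 \<Omega> y. g (y + of_int n / 900) * unity_root 900 (\<mu> * n)))
      = (if a = a' then 30 else 0) * (indicator {0..<1/900} y *\<^sub>R expo (of_int \<mu>) y)"
    (is "AE y in lebesgue. ?F y = _")
    by eventually_elim simp
  have F: "integrable lebesgue ?F"
    by (rule integral_fibre_sum_expo(1)[of 900, unfolded of_int_numeral]) (use g supp fin in auto)
  have "(\<lambda>y. (if a = a' then 30 else 0) * (indicator {0..<1/900} y *\<^sub>R expo (of_int \<mu>) y))
      \<in> borel_measurable lebesgue"
    by (intro borel_measurable_times borel_measurable_const borel_measurable_scaleR
        borel_measurable_indicator expo_measurable) simp
  then have "(LINT y|lebesgue. ?F y)
      = (LINT y|lebesgue. (if a = a' then 30 else 0) * (indicator {0..<1/900} y *\<^sub>R expo (of_int \<mu>) y))"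
    by (rule integral_cong_AE[OF borel_measurable_integrable[OF F] _ ae])
  also have "\<dots> = (if a = a' then 30 else 0) * (LINT y:{0..<1/900}|lebesgue. expo (of_int \<mu>) y)"
    unfolding set_lebesgue_integral_def by (rule integral_mult_right_zero)
  finally have "(LINT y|lebesgue. ?F y)
      = (if a = a' then 30 else 0) * (LINT y:{0..<1/900}|lebesgue. expo (of_int \<mu>) y)" .
  moreover have "(LINT y|lebesgue. ?F y) = (LINT x|lebesgue. g x * expo (of_int \<mu>) x)"
    by (rule integral_fibre_sum_expo(2)[of 900, unfolded of_int_numeral]) (use g supp fin in auto)
  ultimately have "(LINT x|lebesgue. g x * expo (of_int \<mu>) x)
      = (if a = a' then 30 else 0) * (LINT y:{0..<1/900}|lebesgue. expo (of_int \<mu>) y)"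
    by simp
  also have "\<dots> = 0"
    using set_integral_expo_period_eq_0[of 900 "k - k'"] ne by (auto simp: \<mu>_def algebra_simps)
  finally show ?thesis
    by (simp add: L2_inner_def set_lebesgue_integral_def expo_mult_cnj g_def scaleR_conv_of_real \<mu>_def)
qed

lemma cnj_expo: "cnj (expo l x) = expo (- l) x"
  by (simp add: expo_def cis_cnj)

lemma tiles_A_fibre_sums_eq_0:
  fixes g :: "real \<Rightarrow> complex"
  assumes tiles: "tiles_with \<Omega> {of_int n + a / 900 | n a. a \<in> set_A}"
    and g: "integrable lebesgue g" and supp: "\<And>x. x \<notin> \<Omega> \<Longrightarrow> g x = 0"
    and coeffs: "\<And>a k. a \<in> A_int \<Longrightarrow> (LINT x|lebesgue. g x * expo (of_int (900 * k - a)) x) = 0"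
  shows "AE y in lebesgue. y \<in> {0..<1/900} \<longrightarrow>
    (\<forall>a\<in>A_int. (\<Sum>n\<in>fibre 900 \<Omega> y. g (y + of_int n / 900) * unity_root 900 (- a * n)) = 0)"
proof -
  define S where "S \<mu> y = (\<Sum>n\<in>fibre 900 \<Omega> y. g (y + of_int n / 900) * unity_root 900 (\<mu> * n))"
    for \<mu> y
  have "AE y in lebesgue. finite (fibre 900 \<Omega> y)"
    using tiles_A_fibres[OF tiles] by eventually_elim (rule tiles_mod_A_int_card)
  note fibre_sum = integral_fibre_sum_expo[of 900, unfolded of_int_numeral, OF _ g supp this]
  have "AE y in lebesgue. indicator {0..<1/900} y *\<^sub>R (expo (of_int (- a)) y * S (- a) y) = 0"
    if "a \<in> A_int" for a
  proof (rule fourier_coeffs_eq_0_imp_AE_eq_0[of 900])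
    show "integrable lebesgue (\<lambda>y. indicator {0..<1/900} y *\<^sub>R (expo (of_int (- a)) y * S (- a) y))"
      unfolding S_def by (rule fibre_sum(1)) simp
    fix k :: int
    have "unity_root 900 (- a * n) = unity_root 900 ((900 * k - a) * n)" for n
    proof -
      have "unity_root 900 ((900 * k - a) * n) = unity_root 900 (- a * n + 900 * (k * n))"
        by (simp add: algebra_simps)
      also have "\<dots> = unity_root 900 (- a * n)" unfolding unity_root_add by simp
      finally show ?thesis by simp
    qed
    then have S: "S (- a) y = S (900 * k - a) y" for y by (simp add: S_def)
    have expo: "expo (of_int (- a)) y * expo (900 * of_int k) y = expo (of_int (900 * k - a)) y" for y
      by (simp add: expo_mult algebra_simps)
    have "indicator {0..<1/900} y *\<^sub>R (expo (of_int (- a)) y * S (- a) y) * expo (900 * of_int k) y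
        = indicator {0..<1/900} y *\<^sub>R ((expo (of_int (- a)) y * expo (900 * of_int k) y) * S (- a) y)"
      for y by (simp add: mult_ac)
    also have "\<dots> y = indicator {0..<1/900} y *\<^sub>R (expo (of_int (900 * k - a)) y * S (900 * k - a) y)"
      for y unfolding expo S ..
    finally have integrand: "indicator {0..<1/900} y *\<^sub>R (expo (of_int (- a)) y * S (- a) y) * expo (900 * of_int k) y
        = indicator {0..<1/900} y *\<^sub>R (expo (of_int (900 * k - a)) y * S (900 * k - a) y)" for y .
    have "(LINT y|lebesgue. indicator {0..<1/900} y *\<^sub>R (expo (of_int (- a)) y * S (- a) y) *
        expo (900 * of_int k) y) =
        (LINT y|lebesgue. indicator {0..<1/900} y *\<^sub>R (expo (of_int (900 * k - a)) y * S (900 * k - a) y))"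
      unfolding integrand ..
    also have "\<dots> = (LINT x|lebesgue. g x * expo (of_int (900 * k - a)) x)"
      unfolding S_def by (rule fibre_sum(2)) simp
    also have "\<dots> = 0" by (rule coeffs[OF that])
    finally show "(LINT y|lebesgue. indicator {0..<1/900} y *\<^sub>R (expo (of_int (- a)) y * S (- a) y) *
        expo (900 * of_int k) y) = 0" .
  qed simp_all
  then have "AE y in lebesgue. \<forall>a\<in>A_int. indicator {0..<1/900} y *\<^sub>R (expo (of_int (- a)) y * S (- a) y) = 0"
    by (subst eventually_ball_finite_distrib) (auto simp: A_int_def A_indices_def)
  then show ?thesis
    by eventually_elim (auto simp: S_def expo_def)
qed

lemma tiles_A_complete:
  assumes tiles: "tiles_with \<Omega> {of_int n + a / 900 | n a. a \<in> set_A}"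
    and f: "L2_on \<Omega> f"
    and orth: "\<forall>l\<in>{900 * of_int k + a | k a. a \<in> set_A}. L2_inner \<Omega> f (expo l) = 0"
  shows "AE x in lebesgue. x \<in> \<Omega> \<longrightarrow> f x = 0"
proof -
  define g where "g = (\<lambda>x. indicator \<Omega> x *\<^sub>R f x)"
  have "\<Omega> \<in> sets lebesgue" "emeasure lebesgue \<Omega> < \<infinity>" using tiles by (auto simp: tiles_with_def)
  with f have g: "integrable lebesgue g" unfolding g_def by (rule L2_on_integrable)
  have supp: "g x = 0" if "x \<notin> \<Omega>" for x using that by (simp add: g_def)
  have "(LINT x|lebesgue. g x * expo (of_int (900 * k - a)) x) = 0" if "a \<in> A_int" for a k
  proof -
    have "(LINT x|lebesgue. g x * expo (of_int (900 * k - a)) x) = L2_inner \<Omega> f (expo (of_int (900 * (- k) + a)))"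
      by (simp add: g_def L2_inner_def set_lebesgue_integral_def cnj_expo algebra_simps)
    also have "\<dots> = 0" using orth[unfolded spectrum_A_eq] that by blast
    finally show ?thesis .
  qed
  then have "AE y in lebesgue. y \<in> {0..<1/900} \<longrightarrow>
      (\<forall>a\<in>A_int. (\<Sum>n\<in>fibre 900 \<Omega> y. g (y + of_int n / 900) * unity_root 900 (- a * n)) = 0)"
    by (intro tiles_A_fibre_sums_eq_0[OF tiles g]) (use supp in auto)
  with tiles_A_fibres[OF tiles]
  have "AE y in lebesgue. y \<in> {0..<1/900} \<longrightarrow> (\<forall>n\<in>fibre 900 \<Omega> y. g (y + of_int n / 900) = 0)"
    by eventually_elim (auto intro: tiles_mod_A_int_coefficients_eq_0)
  then have "AE x in lebesgue. x \<in> \<Omega> \<longrightarrow> g x = 0" by (rule AE_if_AE_fibres[rotated]) simp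
  then show ?thesis by eventually_elim (simp add: g_def)
qed

lemma discrete_set_Ints: "\<Lambda> \<subseteq> \<int> \<Longrightarrow> discrete_set \<Lambda>"
  unfolding discrete_set_def dist_real_def
  by (metis Ints_diff Ints_nonzero_abs_less1 eq_iff_diff_eq_0 subsetD zero_less_one)

theorem theorem4p1:
  shows "universal_spectrum {900 * of_int k + a | k a. a \<in> set_A}
                            {of_int n + a / 900 | n a. a \<in> set_A}"
  unfolding universal_spectrum_def
proof (intro allI impI)
  fix \<Omega> assume tiles: "tiles_with \<Omega> {of_int n + a / 900 | n a. a \<in> set_A}"
  have "\<Omega> \<in> sets lebesgue \<and> 0 < emeasure lebesgue \<Omega> \<and> emeasure lebesgue \<Omega> < \<infinity>"
    using tiles unfolding tiles_with_def by blast
  moreover have "discrete_set {900 * of_int k + a | k a. a \<in> set_A}"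
    by (rule discrete_set_Ints) (auto simp: spectrum_A_eq)
  moreover have "\<forall>l\<in>{900 * of_int k + a | k a. a \<in> set_A}. \<forall>m\<in>{900 * of_int k + a | k a. a \<in> set_A}.
      l \<noteq> m \<longrightarrow> L2_inner \<Omega> (expo l) (expo m) = 0"
    unfolding spectrum_A_eq using tiles_A_orthogonal[OF tiles] by auto
  moreover have "\<forall>f. L2_on \<Omega> f \<longrightarrow> (\<forall>l\<in>{900 * of_int k + a | k a. a \<in> set_A}. L2_inner \<Omega> f (expo l) = 0) \<longrightarrow>
      (AE x in lebesgue. x \<in> \<Omega> \<longrightarrow> f x = 0)"
    using tiles_A_complete[OF tiles] by blast
  ultimately show "spectral_with \<Omega> {900 * of_int k + a | k a. a \<in> set_A}"
    unfolding spectral_with_def by blast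
qed

end
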